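(* Let $R$ be a commutative ring, $M$ an $R$-module having at least one prime submodule, $X=\mathrm{Spec}(M)$, $N$ an $R$-module, $K\le M$, and $U=X\setminus V(K)$. Then $\Gamma_{(K:M)}(\mathcal{A}(N,M)(U))=0$.
   Context: For a submodule $L$ of an $R$-module $M$, $(L:M)=\{r\in R\mid rM\subseteq L\}$. A submodule $P$ of $M$ is prime if $P\neq M$ and whenever $rm\in P$ ($r\in R$, $m\in M$) then $r\in (P:M)$ or $m\in P$. $\mathrm{Spec}(M)$ is the set of prime submodules. For $L\le M$, $V(L)=\{P\in X\mid (P:M)\supseteq (L:M)\}$; these are the closed sets of the Zariski topology on $X$. For open $U\subseteq X$, $\mathrm{Supp}(U)=\{(P:M)\mid P\in U\}$. $\mathcal{A}(N,M)(U)$ is the $R$-module (componentwise operations) of families $(\gamma_{\mathfrak p})_{\mathfrak p\in\mathrm{Supp}(U)}\in\prod_{\mathfrak p\in\mathrm{Supp}(U)}N_{\mathfrak p}$ such that for each $Q\in U$ there exist an open neighbourhood $W\subseteq U$ of $Q$ and $s\in R$, $m\in N$ with $s\notin (P:M)$ and $\gamma_{(P:M)}=m/s\in N_{(P:M)}$ for every $P\in W$. For an ideal $I$ and module $H$, $\Gamma_I(H)=\bigcup_{n\ge1}(0:_H I^n)$. *)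

theory Defs
  imports Complex_Main
begin

text \<open>Modules over a commutative ring R (the type 'r) are rendered as types with a
scalar action satisfying the HOL locale module. sM is the action on M, sN on N.\<close>

definition mcolon :: "('r::comm_ring_1 \<Rightarrow> 'm::ab_group_add \<Rightarrow> 'm) \<Rightarrow> 'm set \<Rightarrow> 'r set" where
  "mcolon sM L = {r. \<forall>m. sM r m \<in> L}"

definition is_prime_sub :: "('r::comm_ring_1 \<Rightarrow> 'm::ab_group_add \<Rightarrow> 'm) \<Rightarrow> 'm set \<Rightarrow> bool" where
  "is_prime_sub sM P \<longleftrightarrow> module.subspace sM P \<and> P \<noteq> UNIV \<and>
     (\<forall>r m. sM r m \<in> P \<longrightarrow> r \<in> mcolon sM P \<or> m \<in> P)"

definition mSpec :: "('r::comm_ring_1 \<Rightarrow> 'm::ab_group_add \<Rightarrow> 'm) \<Rightarrow> 'm set set" where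
  "mSpec sM = {P. is_prime_sub sM P}"

definition VZ :: "('r::comm_ring_1 \<Rightarrow> 'm::ab_group_add \<Rightarrow> 'm) \<Rightarrow> 'm set \<Rightarrow> 'm set set" where
  "VZ sM L = {P \<in> mSpec sM. mcolon sM L \<subseteq> mcolon sM P}"

definition zopen :: "('r::comm_ring_1 \<Rightarrow> 'm::ab_group_add \<Rightarrow> 'm) \<Rightarrow> 'm set set \<Rightarrow> bool" where
  "zopen sM U \<longleftrightarrow> (\<exists>L. module.subspace sM L \<and> U = mSpec sM - VZ sM L)"

definition mSupp :: "('r::comm_ring_1 \<Rightarrow> 'm::ab_group_add \<Rightarrow> 'm) \<Rightarrow> 'm set set \<Rightarrow> 'r set set" where
  "mSupp sM U = (\<lambda>P. mcolon sM P) ` U"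

text \<open>Localization N_p: the fraction n/s is the equivalence class of (n,s).\<close>
definition loc_class :: "('r::comm_ring_1 \<Rightarrow> 'n::ab_group_add \<Rightarrow> 'n) \<Rightarrow> 'r set \<Rightarrow> 'n \<Rightarrow> 'r \<Rightarrow> ('n \<times> 'r) set" where
  "loc_class sN p n s = {(n', s'). s' \<notin> p \<and> (\<exists>t. t \<notin> p \<and> sN t (sN s' n - sN s n') = 0)}"

definition localization :: "('r::comm_ring_1 \<Rightarrow> 'n::ab_group_add \<Rightarrow> 'n) \<Rightarrow> 'r set \<Rightarrow> ('n \<times> 'r) set set" where
  "localization sN p = {loc_class sN p n s | n s. s \<notin> p}"

definition loc_scale :: "('r::comm_ring_1 \<Rightarrow> 'n::ab_group_add \<Rightarrow> 'n) \<Rightarrow> 'r set \<Rightarrow> 'r \<Rightarrow> ('n \<times> 'r) set \<Rightarrow> ('n \<times> 'r) set" where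
  "loc_scale sN p r c = \<Union>{loc_class sN p (sN r n) s | n s. (n, s) \<in> c}"

text \<open>Elements of A(N,M)(U): families indexed by Supp(U) (extended by {} outside).\<close>
definition sections :: "('r::comm_ring_1 \<Rightarrow> 'm::ab_group_add \<Rightarrow> 'm) \<Rightarrow> ('r \<Rightarrow> 'n::ab_group_add \<Rightarrow> 'n)
    \<Rightarrow> 'm set set \<Rightarrow> ('r set \<Rightarrow> ('n \<times> 'r) set) set" where
  "sections sM sN U = {\<gamma>. (\<forall>p. p \<notin> mSupp sM U \<longrightarrow> \<gamma> p = {}) \<and>
      (\<forall>p \<in> mSupp sM U. \<gamma> p \<in> localization sN p) \<and>
      (\<forall>Q \<in> U. \<exists>W. zopen sM W \<and> W \<subseteq> U \<and> Q \<in> W \<and>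
         (\<exists>s m. \<forall>P \<in> W. s \<notin> mcolon sM P \<and> \<gamma> (mcolon sM P) = loc_class sN (mcolon sM P) m s))}"

definition sec_scale :: "('r::comm_ring_1 \<Rightarrow> 'm::ab_group_add \<Rightarrow> 'm) \<Rightarrow> ('r \<Rightarrow> 'n::ab_group_add \<Rightarrow> 'n)
    \<Rightarrow> 'm set set \<Rightarrow> 'r \<Rightarrow> ('r set \<Rightarrow> ('n \<times> 'r) set) \<Rightarrow> ('r set \<Rightarrow> ('n \<times> 'r) set)" where
  "sec_scale sM sN U r \<gamma> = (\<lambda>p. if p \<in> mSupp sM U then loc_scale sN p r (\<gamma> p) else {})"

definition sec_zero :: "('r::comm_ring_1 \<Rightarrow> 'm::ab_group_add \<Rightarrow> 'm) \<Rightarrow> ('r \<Rightarrow> 'n::ab_group_add \<Rightarrow> 'n)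
    \<Rightarrow> 'm set set \<Rightarrow> ('r set \<Rightarrow> ('n \<times> 'r) set)" where
  "sec_zero sM sN U = (\<lambda>p. if p \<in> mSupp sM U then loc_class sN p 0 1 else {})"

definition ideal_pow :: "'r::comm_ring_1 set \<Rightarrow> nat \<Rightarrow> 'r set" where
  "ideal_pow I n = module.span ((*) :: 'r \<Rightarrow> 'r \<Rightarrow> 'r)
     {(\<Prod>i<n. f i) | f. \<forall>i<n. f i \<in> I}"

definition Gamma_tors :: "('r::comm_ring_1 \<Rightarrow> 'm::ab_group_add \<Rightarrow> 'm) \<Rightarrow> ('r \<Rightarrow> 'n::ab_group_add \<Rightarrow> 'n)
    \<Rightarrow> 'm set set \<Rightarrow> 'r set \<Rightarrow> ('r set \<Rightarrow> ('n \<times> 'r) set) set" where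
  "Gamma_tors sM sN U I = {\<gamma> \<in> sections sM sN U. \<exists>n\<ge>1. \<forall>r \<in> ideal_pow I n.
      sec_scale sM sN U r \<gamma> = sec_zero sM sN U}"

end

theory Submission
  imports Defs
begin

text \<open>For every prime submodule P of U = Spec(M) - V(K) the ideal (P:M) is prime and does not
contain (K:M), so some r \<in> (K:M) lies outside (P:M). If I^n annihilates a section \<gamma>, then
r^n \<gamma>_p = 0 in N_p with p = (P:M); since r^n \<notin> p acts injectively on N_p, every stalk
\<gamma>_p vanishes.\<close>

lemma module_times: "module ((*) :: 'r::comm_ring_1 \<Rightarrow> 'r \<Rightarrow> 'r)"
  by unfold_locales (simp_all add: distrib_left distrib_right)

lemma power_in_ideal_pow:
  assumes "r \<in> I"
  shows "r ^ n \<in> ideal_pow I n"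
proof -
  have "r ^ n \<in> {(\<Prod>i<n. f i) | f. \<forall>i<n. f i \<in> I}"
    using assms by (intro CollectI exI[of _ "\<lambda>_. r"]) simp
  then show ?thesis
    unfolding ideal_pow_def by (rule module.span_base[OF module_times])
qed

locale multiplicative_complement = module sN
  for sN :: "'r::comm_ring_1 \<Rightarrow> 'n::ab_group_add \<Rightarrow> 'n" +
  fixes p :: "'r set"
  assumes one_notin: "1 \<notin> p"
    and mult_notin: "a \<notin> p \<Longrightarrow> b \<notin> p \<Longrightarrow> a * b \<notin> p"
begin

lemma power_notin: "r \<notin> p \<Longrightarrow> r ^ n \<notin> p"
  by (induction n) (simp_all add: one_notin mult_notin)

lemma loc_class_refl: "s \<notin> p \<Longrightarrow> (n, s) \<in> loc_class sN p n s"
  using one_notin by (auto simp: loc_class_def intro!: exI[of _ 1])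

lemma loc_class_sym:
  assumes "s \<notin> p" "(n', s') \<in> loc_class sN p n s"
  shows "(n, s) \<in> loc_class sN p n' s'"
proof -
  obtain t where "t \<notin> p" "sN t (sN s' n - sN s n') = 0"
    using assms(2) by (auto simp: loc_class_def)
  then have "sN t (sN s n' - sN s' n) = 0"
    by (metis minus_diff_eq neg_equal_0_iff_equal scale_minus_right)
  with \<open>t \<notin> p\<close> assms(1) show ?thesis
    by (auto simp: loc_class_def)
qed

lemma loc_class_trans:
  assumes "(n', s') \<in> loc_class sN p n s" "(n'', s'') \<in> loc_class sN p n' s'"
  shows "(n'', s'') \<in> loc_class sN p n s"
proof -
  obtain t where t: "t \<notin> p" "sN t (sN s' n - sN s n') = 0" and "s' \<notin> p"
    using assms(1) by (auto simp: loc_class_def)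
  obtain t' where t': "t' \<notin> p" "sN t' (sN s'' n' - sN s' n'') = 0" and "s'' \<notin> p"
    using assms(2) by (auto simp: loc_class_def)
  \<comment> \<open>multiply the first relation by t' s'' and the second by t s, then add\<close>
  have "sN (t' * s'') (sN t (sN s' n - sN s n')) + sN (t * s) (sN t' (sN s'' n' - sN s' n'')) = 0"
    using t(2) t'(2) by simp
  then have "sN (t * t' * s') (sN s'' n - sN s n'') = 0"
    by (simp add: algebra_simps)
  moreover have "t * t' * s' \<notin> p"
    using t t' \<open>s' \<notin> p\<close> by (simp add: mult_notin)
  ultimately show ?thesis
    using \<open>s'' \<notin> p\<close> by (auto simp: loc_class_def)
qed

lemma loc_class_eq:
  assumes "s \<notin> p" "(n', s') \<in> loc_class sN p n s"
  shows "loc_class sN p n' s' = loc_class sN p n s"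
proof (intro set_eqI iffI; clarify)
  fix a b
  show "(a, b) \<in> loc_class sN p n s" if "(a, b) \<in> loc_class sN p n' s'"
    using loc_class_trans[OF assms(2) that] .
  show "(a, b) \<in> loc_class sN p n' s'" if "(a, b) \<in> loc_class sN p n s"
    using loc_class_trans[OF loc_class_sym[OF assms] that] .
qed

lemma loc_class_eq_zero_iff:
  assumes "s \<notin> p"
  shows "loc_class sN p n s = loc_class sN p 0 1 \<longleftrightarrow> (\<exists>t. t \<notin> p \<and> sN t n = 0)"
proof
  assume "loc_class sN p n s = loc_class sN p 0 1"
  then have "(0, 1) \<in> loc_class sN p n s"
    using loc_class_refl one_notin by simp
  then show "\<exists>t. t \<notin> p \<and> sN t n = 0"
    by (auto simp: loc_class_def)
next
  assume "\<exists>t. t \<notin> p \<and> sN t n = 0"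
  then have "(0, 1) \<in> loc_class sN p n s"
    using one_notin by (auto simp: loc_class_def)
  then show "loc_class sN p n s = loc_class sN p 0 1"
    using loc_class_eq assms by simp
qed

lemma loc_scale_loc_class:
  assumes "s \<notin> p"
  shows "loc_scale sN p r (loc_class sN p n s) = loc_class sN p (sN r n) s"
proof -
  have "loc_class sN p (sN r n') s' = loc_class sN p (sN r n) s"
    if related: "(n', s') \<in> loc_class sN p n s" for n' s'
  proof -
    obtain t where "s' \<notin> p" "t \<notin> p" "sN t (sN s' n - sN s n') = 0"
      using related by (auto simp: loc_class_def)
    moreover have "sN t (sN s' (sN r n) - sN s (sN r n')) = sN r (sN t (sN s' n - sN s n'))"
      by (simp add: scale_right_diff_distrib ac_simps)
    ultimately have "(sN r n', s') \<in> loc_class sN p (sN r n) s"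
      by (auto simp: loc_class_def)
    then show ?thesis
      by (rule loc_class_eq[OF assms])
  qed
  then have "{loc_class sN p (sN r n') s' | n' s'. (n', s') \<in> loc_class sN p n s}
      = {loc_class sN p (sN r n) s}"
    using loc_class_refl[OF assms] by blast
  then show ?thesis
    by (simp add: loc_scale_def)
qed

lemma loc_scale_eq_zero_imp:
  assumes "r \<notin> p" "s \<notin> p"
    and "loc_scale sN p r (loc_class sN p n s) = loc_class sN p 0 1"
  shows "loc_class sN p n s = loc_class sN p 0 1"
proof -
  obtain t where "t \<notin> p" "sN t (sN r n) = 0"
    using assms(2,3) by (auto simp: loc_scale_loc_class loc_class_eq_zero_iff)
  then have "t * r \<notin> p \<and> sN (t * r) n = 0"
    using assms(1) by (simp add: mult_notin)
  then show ?thesis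
    using loc_class_eq_zero_iff assms(2) by blast
qed

end

lemma multiplicative_complement_colon_prime:
  assumes "module sM" "module sN" "P \<in> mSpec sM"
  shows "multiplicative_complement sN (mcolon sM P)"
proof (intro multiplicative_complement.intro[OF assms(2)] multiplicative_complement_axioms.intro)
  interpret M: module sM by fact
  have prime: "is_prime_sub sM P"
    using assms(3) by (simp add: mSpec_def)
  then show "1 \<notin> mcolon sM P"
    by (auto simp: is_prime_sub_def mcolon_def)
  fix a b
  assume a: "a \<notin> mcolon sM P" and b: "b \<notin> mcolon sM P"
  show "a * b \<notin> mcolon sM P"
  proof
    assume "a * b \<in> mcolon sM P"
    then have "sM a (sM b m) \<in> P" for m
      by (simp add: mcolon_def)
    then have "sM b m \<in> P" for m
      using prime a unfolding is_prime_sub_def by blast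
    then have "b \<in> mcolon sM P"
      by (simp add: mcolon_def)
    with b show False ..
  qed
qed

lemma sec_zero_in_sections:
  assumes "module sM" "module sN" "zopen sM U" "U \<subseteq> mSpec sM"
  shows "sec_zero sM sN U \<in> sections sM sN U"
proof -
  have one: "1 \<notin> mcolon sM P" if "P \<in> U" for P
    using multiplicative_complement.one_notin[OF multiplicative_complement_colon_prime] assms that
    by blast
  show ?thesis
    unfolding sections_def
  proof (intro CollectI conjI ballI allI impI)
    show "sec_zero sM sN U p = {}" if "p \<notin> mSupp sM U" for p
      using that by (simp add: sec_zero_def)
    show "sec_zero sM sN U p \<in> localization sN p" if "p \<in> mSupp sM U" for p
      using that one by (auto simp: sec_zero_def localization_def mSupp_def)
    show "\<exists>W. zopen sM W \<and> W \<subseteq> U \<and> Q \<in> W \<and>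
        (\<exists>s m. \<forall>P \<in> W. s \<notin> mcolon sM P \<and> sec_zero sM sN U (mcolon sM P) = loc_class sN (mcolon sM P) m s)"
      if "Q \<in> U" for Q
      using that assms(3) one
      by (intro exI[of _ U] conjI exI[of _ 1] exI[of _ 0]) (auto simp: sec_zero_def mSupp_def)
  qed
qed

lemma sec_scale_sec_zero:
  assumes "module sM" "module sN" "U \<subseteq> mSpec sM"
  shows "sec_scale sM sN U r (sec_zero sM sN U) = sec_zero sM sN U"
proof
  fix p
  show "sec_scale sM sN U r (sec_zero sM sN U) p = sec_zero sM sN U p"
  proof (cases "p \<in> mSupp sM U")
    case True
    then obtain P where "P \<in> U" "p = mcolon sM P"
      by (auto simp: mSupp_def)
    then interpret multiplicative_complement sN p
      using multiplicative_complement_colon_prime assms by blast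
    show ?thesis
      using True by (simp add: sec_scale_def sec_zero_def loc_scale_loc_class one_notin)
  qed (simp add: sec_scale_def sec_zero_def)
qed

lemma sec_zero_in_Gamma_tors:
  assumes "module sM" "module sN" "zopen sM U" "U \<subseteq> mSpec sM"
  shows "sec_zero sM sN U \<in> Gamma_tors sM sN U I"
  using sec_zero_in_sections[OF assms] sec_scale_sec_zero[OF assms(1,2,4)]
  unfolding Gamma_tors_def by blast

lemma Gamma_tors_eq_sec_zero:
  assumes "module sM" "module sN" "U \<subseteq> mSpec sM"
    and avoids: "\<And>P. P \<in> U \<Longrightarrow> \<not> I \<subseteq> mcolon sM P"
    and "\<gamma> \<in> Gamma_tors sM sN U I"
  shows "\<gamma> = sec_zero sM sN U"
proof
  fix p
  obtain n where is_section: "\<gamma> \<in> sections sM sN U"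
    and annihilated: "\<And>r. r \<in> ideal_pow I n \<Longrightarrow> sec_scale sM sN U r \<gamma> = sec_zero sM sN U"
    using assms(5) unfolding Gamma_tors_def by blast
  show "\<gamma> p = sec_zero sM sN U p"
  proof (cases "p \<in> mSupp sM U")
    case False
    then show ?thesis
      using is_section by (simp add: sections_def sec_zero_def)
  next
    case True
    then obtain P where "P \<in> U" and p: "p = mcolon sM P"
      by (auto simp: mSupp_def)
    then interpret multiplicative_complement sN p
      using multiplicative_complement_colon_prime assms(1-3) by blast
    obtain r where "r \<in> I" "r \<notin> p"
      using avoids[OF \<open>P \<in> U\<close>] p by blast
    obtain n0 s0 where \<gamma>p: "\<gamma> p = loc_class sN p n0 s0" and "s0 \<notin> p"
      using is_section True by (auto simp: sections_def localization_def)
    have "sec_scale sM sN U (r ^ n) \<gamma> p = sec_zero sM sN U p"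
      using annihilated[OF power_in_ideal_pow[OF \<open>r \<in> I\<close>]] by simp
    then have "loc_scale sN p (r ^ n) (loc_class sN p n0 s0) = loc_class sN p 0 1"
      using True \<gamma>p by (simp add: sec_scale_def sec_zero_def)
    then have "\<gamma> p = loc_class sN p 0 1"
      using loc_scale_eq_zero_imp[OF power_notin[OF \<open>r \<notin> p\<close>] \<open>s0 \<notin> p\<close>] \<gamma>p by simp
    then show ?thesis
      using True by (simp add: sec_zero_def)
  qed
qed

theorem lemma3p6:
  fixes sM :: "'r::comm_ring_1 \<Rightarrow> 'm::ab_group_add \<Rightarrow> 'm"
    and sN :: "'r \<Rightarrow> 'n::ab_group_add \<Rightarrow> 'n"
    and K :: "'m set"
  assumes "module sM" and "module sN"
    and "mSpec sM \<noteq> {}"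
    and "module.subspace sM K"
  shows "Gamma_tors sM sN (mSpec sM - VZ sM K) (mcolon sM K) = {sec_zero sM sN (mSpec sM - VZ sM K)}"
proof -
  let ?U = "mSpec sM - VZ sM K"
  have "zopen sM ?U"
    using assms(4) unfolding zopen_def by blast
  then have "sec_zero sM sN ?U \<in> Gamma_tors sM sN ?U (mcolon sM K)"
    using sec_zero_in_Gamma_tors assms(1,2) by blast
  moreover have "\<gamma> = sec_zero sM sN ?U" if "\<gamma> \<in> Gamma_tors sM sN ?U (mcolon sM K)" for \<gamma>
    by (rule Gamma_tors_eq_sec_zero[OF assms(1,2) _ _ that]) (auto simp: VZ_def)
  ultimately show ?thesis
    by blast
qed

end
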